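(* For every real $\tau$ with $0\le\tau\le 1$, $$R(\tau)\ \ge\ \underline{R}(\tau):=(1+\tau)-(1+\tau)\log_2(1+\tau)+\tau\log_2\tau ,$$ with the convention $0\log_2 0=0$.
   Context: Binary Z-channel with noiseless feedback: an input symbol $0$ is always received as $0$; an input symbol $1$ is received either as $1$ or (an error) as $0$. A feedback encoding strategy of blocklength $n$ for a finite message set $\mathcal M$ is a collection of functions $c_i:\mathcal M\times\{0,1\}^{i-1}\to\{0,1\}$, $i=1,\dots,n$; when sending $m$, the $i$-th transmitted symbol is $c_i(m,y^{i-1})$, where $y^{i-1}=(y_1,\dots,y_{i-1})$ are the previously received symbols (known to the sender through feedback). Write $c(m,y^{n-1})=(c_1(m),c_2(m,y_1),\dots,c_n(m,y^{n-1}))$. For an integer $t\ge0$ let $\mathcal Y^n_t(m)=\{y^n\in\{0,1\}^n: y_i\le c_i(m,y^{i-1})\text{ for all }i,\ d_H(y^n,c(m,y^{n-1}))\le t\}$, where $d_H$ is the Hamming distance. The strategy is successful if $\mathcal Y^n_t(m_1)\cap\mathcal Y^n_t(m_2)=\emptyset$ for all distinct $m_1,m_2\in\mathcal M$. $M(n,t)$ is the maximum $|\mathcal M|$ for which a successful strategy of blocklength $n$ with at most $t$ errors exists. For $0\le\tau\le1$, $R(\tau):=\limsup_{n\to\infty}\frac{1}{n}\log_2 M(n,\lceil\tau n\rceil)$. All logarithms are base $2$. *)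

theory Defs
  imports "HOL-Analysis.Analysis"
begin

text \<open>Feedback encoding strategy of blocklength n for messages {0..<k}:
  enc i m ys is the (i+1)-th transmitted symbol (i = 0..n-1) when sending m,
  given the received prefix ys of length i. Symbols: False = 0, True = 1.\<close>

type_synonym strategy = "nat \<Rightarrow> nat \<Rightarrow> bool list \<Rightarrow> bool"

definition Yset :: "nat \<Rightarrow> nat \<Rightarrow> strategy \<Rightarrow> nat \<Rightarrow> bool list set" where
  "Yset n t enc m = {ys. length ys = n
      \<and> (\<forall>i<n. ys ! i \<le> enc i m (take i ys))
      \<and> card {i. i < n \<and> ys ! i \<noteq> enc i m (take i ys)} \<le> t}"

definition successful :: "nat \<Rightarrow> nat \<Rightarrow> nat \<Rightarrow> strategy \<Rightarrow> bool" where
  "successful n t k enc \<longleftrightarrow>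
     (\<forall>m1<k. \<forall>m2<k. m1 \<noteq> m2 \<longrightarrow> Yset n t enc m1 \<inter> Yset n t enc m2 = {})"

definition Mmax :: "nat \<Rightarrow> nat \<Rightarrow> nat" where
  "Mmax n t = Max {k. \<exists>enc. successful n t k enc}"

definition Rate :: "real \<Rightarrow> ereal" where
  "Rate \<tau> = limsup (\<lambda>n. ereal (log 2 (real (Mmax n (nat \<lceil>\<tau> * real n\<rceil>))) / real n))"

definition Rlow :: "real \<Rightarrow> real" where
  "Rlow \<tau> = (1 + \<tau>) - (1 + \<tau>) * log 2 (1 + \<tau>) + (if \<tau> = 0 then 0 else \<tau> * log 2 \<tau>)"

end

theory Submission
  imports Defs "HOL-Real_Asymp.Real_Asymp"
begin

text \<open>The sender partitions the messages still consistent with the received prefix, each with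
  its remaining error budget, into those sending 1 and those sending 0. Giving a message with
  budget b the weight (b + j choose j), Pascal's rule allows this to be done so that on both
  branches the total weight of all messages but one stays at most (q choose j), where q is the
  remaining blocklength. For K messages with budget s and blocklength n = s + 2 j this yields
  M(n, t) >= (n choose j) / (s + j choose j) = (n + s choose s + j) / (n + s choose s), and the
  estimates 2^N / N <= (N choose N/2) and (N choose s) s^s (N - s)^(N - s) <= N^N turn this into
  the rate bound.\<close>

section \<open>Strategies branching on the first received symbol\<close>

lemma Yset_mono: "t \<le> s \<Longrightarrow> Yset n t enc m \<subseteq> Yset n s enc m"
  unfolding Yset_def by auto

definition shift_strategy :: "bool \<Rightarrow> strategy \<Rightarrow> strategy" where
  "shift_strategy y enc = (\<lambda>i m ys. enc (Suc i) m (y # ys))"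

lemma card_Collect_less_Suc:
  "card {i. i < Suc q \<and> P i} = card {k. k < q \<and> P (Suc k)} + (if P 0 then 1 else 0)"
proof -
  have "{i. i < Suc q \<and> P i} = {i. i = 0 \<and> P 0} \<union> Suc ` {k. k < q \<and> P (Suc k)}"
    by (auto simp: less_Suc_eq_0_disj)
  moreover have "{i. i = 0 \<and> P 0} \<inter> Suc ` {k. k < q \<and> P (Suc k)} = {}"
    by auto
  ultimately show ?thesis
    by (simp add: card_Un_disjoint card_image)
qed

lemma Cons_in_Yset_Suc_iff:
  "y # zs \<in> Yset (Suc q) r enc m \<longleftrightarrow>
     y \<le> enc 0 m [] \<and> (y \<noteq> enc 0 m [] \<longrightarrow> 1 \<le> r) \<and>
     zs \<in> Yset q (if y = enc 0 m [] then r else r - 1) (shift_strategy y enc) m"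
  unfolding Yset_def shift_strategy_def
  by (auto simp: All_less_Suc2 card_Collect_less_Suc)

lemma Yset_Suc_obtain_Cons:
  assumes "ys \<in> Yset (Suc q) r enc m"
  obtains y zs where "ys = y # zs"
  using assms unfolding Yset_def by (cases ys) auto

definition branch_strategy :: "(nat \<Rightarrow> bool) \<Rightarrow> strategy \<Rightarrow> strategy \<Rightarrow> strategy" where
  "branch_strategy x enc1 enc0 = (\<lambda>i m ys. if i = 0 then x m
     else if hd ys then enc1 (i - 1) m (tl ys) else enc0 (i - 1) m (tl ys))"

lemma branch_strategy_0 [simp]: "branch_strategy x enc1 enc0 0 m ys = x m"
  by (simp add: branch_strategy_def)

lemma shift_branch_strategy [simp]:
  "shift_strategy y (branch_strategy x enc1 enc0) = (if y then enc1 else enc0)"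
  by (simp add: shift_strategy_def branch_strategy_def)

definition separates :: "nat \<Rightarrow> nat set \<Rightarrow> (nat \<Rightarrow> nat) \<Rightarrow> strategy \<Rightarrow> bool" where
  "separates q A \<beta> enc \<longleftrightarrow> (\<forall>m1\<in>A. \<forall>m2\<in>A. m1 \<noteq> m2 \<longrightarrow>
      Yset q (\<beta> m1) enc m1 \<inter> Yset q (\<beta> m2) enc m2 = {})"

text \<open>After a received 0, every message that sent 1 has spent one error; those without
  budget left are ruled out.\<close>

definition zero_survivors :: "nat set \<Rightarrow> nat set \<Rightarrow> (nat \<Rightarrow> nat) \<Rightarrow> nat set" where
  "zero_survivors A S \<beta> = {m \<in> A. m \<in> S \<longrightarrow> 1 \<le> \<beta> m}"

definition zero_budget :: "nat set \<Rightarrow> (nat \<Rightarrow> nat) \<Rightarrow> nat \<Rightarrow> nat" where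
  "zero_budget S \<beta> m = (if m \<in> S then \<beta> m - 1 else \<beta> m)"

lemma separates_branch_strategy:
  assumes sep1: "separates q S \<beta> enc1"
    and sep0: "separates q (zero_survivors A S \<beta>) (zero_budget S \<beta>) enc0"
    and "S \<subseteq> A"
  shows "separates (Suc q) A \<beta> (branch_strategy (\<lambda>m. m \<in> S) enc1 enc0)"
  unfolding separates_def
proof (intro ballI impI equals0I)
  let ?enc = "branch_strategy (\<lambda>m. m \<in> S) enc1 enc0"
  fix m1 m2 ys
  assume m12: "m1 \<in> A" "m2 \<in> A" "m1 \<noteq> m2"
    and ys: "ys \<in> Yset (Suc q) (\<beta> m1) ?enc m1 \<inter> Yset (Suc q) (\<beta> m2) ?enc m2"
  then obtain y zs where ys_eq: "ys = y # zs"
    by (auto elim: Yset_Suc_obtain_Cons)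
  have y1: "y # zs \<in> Yset (Suc q) (\<beta> m1) ?enc m1" and y2: "y # zs \<in> Yset (Suc q) (\<beta> m2) ?enc m2"
    using ys ys_eq by auto
  show False
  proof (cases y)
    case True
    then have "zs \<in> Yset q (\<beta> m1) enc1 m1 \<inter> Yset q (\<beta> m2) enc1 m2" "m1 \<in> S" "m2 \<in> S"
      using y1 y2 by (auto simp: Cons_in_Yset_Suc_iff)
    then show False
      using sep1 m12 unfolding separates_def by blast
  next
    case False
    then have "zs \<in> Yset q (zero_budget S \<beta> m1) enc0 m1 \<inter> Yset q (zero_budget S \<beta> m2) enc0 m2"
      "m1 \<in> zero_survivors A S \<beta>" "m2 \<in> zero_survivors A S \<beta>"
      using y1 y2 m12 by (auto simp: Cons_in_Yset_Suc_iff zero_budget_def zero_survivors_def)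
    then show False
      using sep0 m12 unfolding separates_def by blast
  qed
qed

lemma separates_if_card_le_1: "finite A \<Longrightarrow> card A \<le> 1 \<Longrightarrow> separates q A \<beta> enc"
  by (auto simp: separates_def card_le_Suc0_iff_eq)

section \<open>A volume condition for separating strategies\<close>

text \<open>The weight ((\<beta> m + j) choose j) of a message obeys Pascal's rule along the two branches
  just as (q choose j) does, with j dropping by one along a received 1. One message M is exempt:
  a single remaining message needs no room.\<close>

definition volume_bound :: "nat \<Rightarrow> nat \<Rightarrow> nat set \<Rightarrow> (nat \<Rightarrow> nat) \<Rightarrow> bool" where
  "volume_bound q j A \<beta> \<longleftrightarrow> card A \<le> 1 \<or>
     (1 \<le> j \<and> (\<exists>M. (\<Sum>m\<in>A - {M}. (\<beta> m + j) choose j) \<le> q choose j))"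

lemma Diff_singleton_nonempty_if_card_gt_1:
  assumes "\<not> card A \<le> 1"
  shows "A - {M} \<noteq> {}"
proof
  assume "A - {M} = {}"
  then have "card A \<le> card {M}"
    by (intro card_mono) auto
  then show False using assms by simp
qed

lemma volume_bound_0_imp_card_le_1:
  assumes "finite A" and "volume_bound 0 j A \<beta>"
  shows "card A \<le> 1"
proof (rule ccontr)
  assume "\<not> card A \<le> 1"
  then obtain M where "1 \<le> j" and "(\<Sum>m\<in>A - {M}. (\<beta> m + j) choose j) \<le> 0 choose j"
    using assms(2) \<open>\<not> card A \<le> 1\<close> unfolding volume_bound_def by blast
  then have M: "(\<Sum>m\<in>A - {M}. (\<beta> m + j) choose j) = 0"
    by (simp add: binomial_eq_0)
  have "A - {M} \<noteq> {}"
    using \<open>\<not> card A \<le> 1\<close> by (rule Diff_singleton_nonempty_if_card_gt_1)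
  then obtain m where m: "m \<in> A - {M}"
    by blast
  have "0 < (\<beta> m + j) choose j"
    by simp
  also have "\<dots> \<le> (\<Sum>m\<in>A - {M}. (\<beta> m + j) choose j)"
    using m \<open>finite A\<close> by (intro member_le_sum) auto
  finally show False
    using M by simp
qed

lemma exists_subset_sum_crossing:
  fixes a :: "'a \<Rightarrow> nat"
  assumes "finite B" and "Q < sum a B"
  shows "\<exists>S\<subseteq>B. \<exists>x\<in>S. sum a (S - {x}) \<le> Q \<and> Q < sum a S"
  using assms
proof (induction B rule: finite_induct)
  case (insert y B)
  show ?case
  proof (cases "Q < sum a B")
    case True
    then show ?thesis using insert.IH by blast
  next
    case False
    then show ?thesis
      using insert by (intro exI[of _ "insert y B"]) auto
  qed
qed simp

lemma le_of_choose_le_choose: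
  assumes "0 < k" and "k \<le> r" and "r choose k \<le> Q choose k"
  shows "r \<le> Q"
proof (rule ccontr)
  assume "\<not> r \<le> Q"
  have "Q choose k < r choose k"
  proof (cases "Q < k")
    case True
    then show ?thesis using \<open>k \<le> r\<close> by (simp add: binomial_eq_0)
  next
    case False
    obtain k' where k: "k = Suc k'"
      using \<open>0 < k\<close> gr0_implies_Suc by blast
    have "Q choose k < (Q choose k') + (Q choose k)"
      using False k by simp
    also have "\<dots> = Suc Q choose k"
      using k by simp
    also have "\<dots> \<le> r choose k"
      using \<open>\<not> r \<le> Q\<close> by (intro binomial_right_mono) simp
    finally show ?thesis .
  qed
  then show False using assms(3) by simp
qed

lemma choose_Suc_ratio_le:
  assumes "r + Suc j \<le> Q"
  shows "Q * ((r + j) choose Suc j) \<le> (Q - Suc j) * ((r + Suc j) choose Suc j)"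
proof -
  let ?w = "(r + Suc j) choose Suc j" and ?b = "(r + j) choose Suc j"
  obtain d where d: "Q = r + Suc j + d"
    using assms le_iff_add by blast
  have "?b \<le> ?w"
    by (intro binomial_right_mono) simp
  have absorb: "r * ?w = (r + Suc j) * ?b"
    using binomial_absorb_comp[of "r + Suc j" "Suc j"] by simp
  have "Q * ?b = (r + Suc j) * ?b + d * ?b"
    using d by (simp add: algebra_simps)
  also have "\<dots> \<le> r * ?w + d * ?w"
    using absorb \<open>?b \<le> ?w\<close> by simp
  also have "\<dots> = (Q - Suc j) * ?w"
    using d by (simp add: algebra_simps)
  finally show ?thesis .
qed

lemma sum_zero_branch_weights_le:
  fixes \<beta> :: "nat \<Rightarrow> nat"
  assumes "finite A" and "S \<subseteq> A - {M}"
  shows "(\<Sum>m\<in>zero_survivors A S \<beta> - {M}. (zero_budget S \<beta> m + Suc j) choose Suc j)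
           + (\<Sum>m\<in>S. (\<beta> m + j) choose j)
         \<le> (\<Sum>m\<in>A - {M}. (\<beta> m + Suc j) choose Suc j)"
proof -
  let ?w0 = "\<lambda>m. if m \<in> S \<longrightarrow> 1 \<le> \<beta> m then (zero_budget S \<beta> m + Suc j) choose Suc j else 0"
  let ?w1 = "\<lambda>m. if m \<in> S then (\<beta> m + j) choose j else 0"
  have "zero_survivors A S \<beta> - {M} = {m \<in> A - {M}. m \<in> S \<longrightarrow> 1 \<le> \<beta> m}"
    by (auto simp: zero_survivors_def)
  then have sum0: "(\<Sum>m\<in>zero_survivors A S \<beta> - {M}. (zero_budget S \<beta> m + Suc j) choose Suc j)
      = (\<Sum>m\<in>A - {M}. ?w0 m)"
    using assms(1) by (simp only: finite_Diff sum.inter_filter)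
  have "(A - {M}) \<inter> S = S"
    using assms(2) by auto
  then have sum1: "(\<Sum>m\<in>S. (\<beta> m + j) choose j) = (\<Sum>m\<in>A - {M}. ?w1 m)"
    using assms(1) sum.inter_restrict[of "A - {M}" _ S] by simp
  have pascal: "?w0 m + ?w1 m \<le> (\<beta> m + Suc j) choose Suc j" for m
  proof (cases "m \<in> S \<and> 1 \<le> \<beta> m")
    case True
    then have "\<beta> m - 1 + Suc j = \<beta> m + j"
      by simp
    then show ?thesis
      using True by (simp add: zero_budget_def)
  qed (auto simp: zero_budget_def)
  show ?thesis
    unfolding sum0 sum1 sum.distrib[symmetric] by (intro sum_mono pascal)
qed

lemma volume_bound_zero_branch:
  assumes "finite A" and "S \<subseteq> A - {M}"
    and total: "(\<Sum>m\<in>A - {M}. (\<beta> m + Suc j) choose Suc j) \<le> Suc q choose Suc j"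
    and ones: "q choose j \<le> (\<Sum>m\<in>S. (\<beta> m + j) choose j)"
  shows "volume_bound q (Suc j) (zero_survivors A S \<beta>) (zero_budget S \<beta>)"
proof -
  have "(\<Sum>m\<in>zero_survivors A S \<beta> - {M}. (zero_budget S \<beta> m + Suc j) choose Suc j)
      \<le> (Suc q choose Suc j) - (q choose j)"
    using sum_zero_branch_weights_le[OF assms(1,2), of \<beta> j] total ones by linarith
  also have "\<dots> = q choose Suc j"
    by simp
  finally show ?thesis
    unfolding volume_bound_def by auto
qed

lemma volume_bound_all_send_one:
  assumes "finite A"
    and total: "(\<Sum>m\<in>A - {M}. (\<beta> m + Suc j) choose Suc j) \<le> Suc q choose Suc j"
  shows "volume_bound q (Suc j) (zero_survivors A A \<beta>) (zero_budget A \<beta>)"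
proof -
  let ?w = "\<lambda>m. (\<beta> m + Suc j) choose Suc j" and ?b = "\<lambda>m. (\<beta> m + j) choose Suc j"
  have "(\<Sum>m\<in>zero_survivors A A \<beta> - {M}. (zero_budget A \<beta> m + Suc j) choose Suc j)
      = (\<Sum>m\<in>zero_survivors A A \<beta> - {M}. ?b m)"
  proof (rule sum.cong)
    fix m assume "m \<in> zero_survivors A A \<beta> - {M}"
    then have "zero_budget A \<beta> m + Suc j = \<beta> m + j"
      by (auto simp: zero_survivors_def zero_budget_def)
    then show "(zero_budget A \<beta> m + Suc j) choose Suc j = ?b m"
      by (simp only:)
  qed simp
  also have "\<dots> \<le> (\<Sum>m\<in>A - {M}. ?b m)"
    using assms(1) by (intro sum_mono2) (auto simp: zero_survivors_def)
  also have "\<dots> \<le> q choose Suc j"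
  proof -
    have "?w m \<le> Suc q choose Suc j" if "m \<in> A - {M}" for m
      using member_le_sum[of m "A - {M}" ?w] that assms(1) total by simp
    then have "Suc q * ?b m \<le> (Suc q - Suc j) * ?w m" if "m \<in> A - {M}" for m
      using that le_of_choose_le_choose[of "Suc j" "\<beta> m + Suc j" "Suc q"]
      by (intro choose_Suc_ratio_le) simp
    then have "Suc q * (\<Sum>m\<in>A - {M}. ?b m) \<le> (Suc q - Suc j) * (\<Sum>m\<in>A - {M}. ?w m)"
      unfolding sum_distrib_left by (rule sum_mono)
    also have "\<dots> \<le> (Suc q - Suc j) * (Suc q choose Suc j)"
      using total by simp
    also have "\<dots> = Suc q * (q choose Suc j)"
      using binomial_absorb_comp[of "Suc q" "Suc j"] by simp
    finally show ?thesis
      using mult_le_cancel1[of "Suc q"] by blast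
  qed
  finally show ?thesis
    unfolding volume_bound_def by auto
qed

lemma volume_bound_Suc_split:
  assumes "finite A" and "\<not> card A \<le> 1"
    and total: "(\<Sum>m\<in>A - {M}. (\<beta> m + Suc j) choose Suc j) \<le> Suc q choose Suc j"
  shows "\<exists>S\<subseteq>A. volume_bound q j S \<beta> \<and>
           volume_bound q (Suc j) (zero_survivors A S \<beta>) (zero_budget S \<beta>)"
proof -
  let ?a = "\<lambda>m. (\<beta> m + j) choose j"
  \<comment> \<open>The messages sending 1 must carry weight at least (q choose j) to relieve the 0-branch,
    but must fit into the 1-branch.\<close>
  consider "j = 0" | "0 < j" "(\<Sum>m\<in>A - {M}. ?a m) \<le> q choose j"
    | "0 < j" "q choose j < (\<Sum>m\<in>A - {M}. ?a m)"
    by linarith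
  then show ?thesis
  proof cases
    case 1
    obtain x where x: "x \<in> A - {M}"
      using Diff_singleton_nonempty_if_card_gt_1[OF assms(2)] by blast
    have "volume_bound q j {x} \<beta>"
      by (simp add: volume_bound_def)
    moreover have "volume_bound q (Suc j) (zero_survivors A {x} \<beta>) (zero_budget {x} \<beta>)"
      using x 1 by (intro volume_bound_zero_branch[OF assms(1) _ total]) auto
    ultimately show ?thesis
      using x by blast
  next
    case 2
    then have "volume_bound q j A \<beta>"
      by (auto simp: volume_bound_def)
    then show ?thesis
      using volume_bound_all_send_one[OF assms(1) total] by blast
  next
    case 3
    obtain S x where S: "S \<subseteq> A - {M}" and "x \<in> S"
      and "(\<Sum>m\<in>S - {x}. ?a m) \<le> q choose j" and crossed: "q choose j < (\<Sum>m\<in>S. ?a m)"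
      using exists_subset_sum_crossing[OF _ 3(2)] assms(1) by blast
    then have "volume_bound q j S \<beta>"
      using 3(1) by (auto simp: volume_bound_def)
    moreover have "volume_bound q (Suc j) (zero_survivors A S \<beta>) (zero_budget S \<beta>)"
      using crossed by (intro volume_bound_zero_branch[OF assms(1) S total]) simp
    ultimately show ?thesis
      using S by blast
  qed
qed

lemma volume_bound_imp_separates:
  "finite A \<Longrightarrow> volume_bound q j A \<beta> \<Longrightarrow> \<exists>enc. separates q A \<beta> enc"
proof (induction q arbitrary: j A \<beta>)
  case 0
  then show ?case
    using volume_bound_0_imp_card_le_1 separates_if_card_le_1 by blast
next
  case (Suc q)
  show ?case
  proof (cases "card A \<le> 1")
    case True
    then show ?thesis
      using Suc.prems(1) separates_if_card_le_1 by blast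
  next
    case False
    then obtain M where "1 \<le> j" and total: "(\<Sum>m\<in>A - {M}. (\<beta> m + j) choose j) \<le> Suc q choose j"
      using Suc.prems(2) unfolding volume_bound_def by blast
    then obtain j' where "j = Suc j'"
      by (cases j) auto
    with total obtain S where "S \<subseteq> A" and vol1: "volume_bound q j' S \<beta>"
      and vol0: "volume_bound q (Suc j') (zero_survivors A S \<beta>) (zero_budget S \<beta>)"
      using volume_bound_Suc_split[OF Suc.prems(1) False] by blast
    have "finite S" "finite (zero_survivors A S \<beta>)"
      using \<open>S \<subseteq> A\<close> Suc.prems(1) finite_subset by (auto simp: zero_survivors_def)
    obtain enc1 where "separates q S \<beta> enc1"
      using Suc.IH[OF \<open>finite S\<close> vol1] by blast
    moreover obtain enc0 where "separates q (zero_survivors A S \<beta>) (zero_budget S \<beta>) enc0"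
      using Suc.IH[OF \<open>finite (zero_survivors A S \<beta>)\<close> vol0] by blast
    ultimately show ?thesis
      using separates_branch_strategy \<open>S \<subseteq> A\<close> by blast
  qed
qed

section \<open>Lower bounds for the maximal number of messages\<close>

fun noiseless_output :: "strategy \<Rightarrow> nat \<Rightarrow> nat \<Rightarrow> bool list" where
  "noiseless_output enc m 0 = []"
| "noiseless_output enc m (Suc i) = noiseless_output enc m i @ [enc i m (noiseless_output enc m i)]"

lemma length_noiseless_output [simp]: "length (noiseless_output enc m i) = i"
  by (induction i) auto

lemma take_noiseless_output: "k \<le> i \<Longrightarrow> take k (noiseless_output enc m i) = noiseless_output enc m k"
  by (induction i) (auto simp: le_Suc_eq)

lemma nth_noiseless_output:
  assumes "k < i"
  shows "noiseless_output enc m i ! k = enc k m (noiseless_output enc m k)"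
proof -
  have "noiseless_output enc m i ! k = noiseless_output enc m (Suc k) ! k"
    using assms take_noiseless_output[of "Suc k" i enc m] by (metis lessI nth_take Suc_leI)
  then show ?thesis
    by (simp add: nth_append)
qed

lemma noiseless_output_in_Yset: "noiseless_output enc m n \<in> Yset n t enc m"
  by (simp add: Yset_def nth_noiseless_output take_noiseless_output cong: conj_cong)

lemma successful_le_two_pow:
  assumes "successful n t k enc"
  shows "k \<le> 2 ^ n"
proof -
  have "inj_on (\<lambda>m. noiseless_output enc m n) {..<k}"
    using assms noiseless_output_in_Yset unfolding successful_def inj_on_def
    by (metis disjoint_iff lessThan_iff)
  moreover have "(\<lambda>m. noiseless_output enc m n) ` {..<k} \<subseteq> {xs. set xs \<subseteq> UNIV \<and> length xs = n}"
    by auto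
  ultimately have "card {..<k} \<le> card {xs :: bool list. set xs \<subseteq> UNIV \<and> length xs = n}"
    using finite_lists_length_eq[of "UNIV :: bool set" n] by (intro card_inj_on_le) auto
  then show ?thesis
    using card_lists_length_eq[of "UNIV :: bool set" n] by simp
qed

lemma le_Mmax:
  assumes "successful n t k enc"
  shows "k \<le> Mmax n t"
proof -
  have "finite {k. \<exists>enc. successful n t k enc}"
    by (rule finite_subset[of _ "{..2 ^ n}"]) (auto dest: successful_le_two_pow)
  then show ?thesis
    unfolding Mmax_def using assms by (intro Max_ge) auto
qed

lemma one_le_Mmax: "1 \<le> Mmax n t"
  by (rule le_Mmax[of n t 1 "\<lambda>_ _ _. False"]) (simp add: successful_def)

lemma le_Mmax_if_volume_bound:
  assumes "1 \<le> j" and "t \<le> s" and "(K - 1) * ((s + j) choose j) \<le> n choose j"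
  shows "K \<le> Mmax n t"
proof -
  have "volume_bound n j {..<K} (\<lambda>_. s)"
  proof (cases "K \<le> 1")
    case False
    then have "(\<Sum>m\<in>{..<K} - {0}. (s + j) choose j) = (K - 1) * ((s + j) choose j)"
      by simp
    then show ?thesis
      using assms(1,3) unfolding volume_bound_def by (intro disjI2 conjI exI[of _ 0]) auto
  qed (simp add: volume_bound_def)
  then obtain enc where "separates n {..<K} (\<lambda>_. s) enc"
    using volume_bound_imp_separates by blast
  then have "successful n t K enc"
    using Yset_mono[OF \<open>t \<le> s\<close>] unfolding successful_def separates_def by blast
  then show ?thesis
    by (rule le_Mmax)
qed

lemma choose_mult_choose_diff:
  assumes "s + j \<le> N"
  shows "(N choose s) * ((N - s) choose j) = (N choose (s + j)) * ((s + j) choose j)"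
proof -
  have "(N choose (s + j)) * ((s + j) choose s) = (N choose s) * ((N - s) choose j)"
    using assms by (simp add: choose_mult)
  moreover have "(s + j) choose s = (s + j) choose j"
    using binomial_symmetric[of s "s + j"] by simp
  ultimately show ?thesis
    by simp
qed

lemma choose_mult_pow_le_pow:
  assumes "s \<le> N"
  shows "(N choose s) * s ^ s * (N - s) ^ (N - s) \<le> N ^ N"
proof -
  have "(N choose s) * s ^ s * (N - s) ^ (N - s) \<le> (\<Sum>k\<le>N. (N choose k) * s ^ k * (N - s) ^ (N - k))"
    using assms by (intro member_le_sum) auto
  also have "\<dots> = (s + (N - s)) ^ N"
    by (simp add: binomial_ring)
  finally show ?thesis
    using assms by simp
qed

lemma choose_div_le_Mmax:
  assumes "1 \<le> j" and "t \<le> s"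
  shows "real (n choose j) / real ((s + j) choose j) \<le> real (Mmax n t)"
proof -
  define C where "C = n choose j"
  define d where "d = (s + j) choose j"
  have "0 < d"
    by (simp add: d_def)
  have "C div d + 1 \<le> Mmax n t"
    using assms div_times_less_eq_dividend[of C d]
    by (intro le_Mmax_if_volume_bound) (auto simp: C_def d_def)
  moreover have "real C / real d \<le> real (C div d + 1)"
  proof -
    have "C < C div d * d + d"
      using \<open>0 < d\<close> div_mult_mod_eq[of C d] mod_less_divisor[of d C] by linarith
    also have "\<dots> = (C div d + 1) * d"
      by simp
    finally have "C < (C div d + 1) * d" .
    then have "real C < real (C div d + 1) * real d"
      by (metis of_nat_less_iff of_nat_mult)
    then show ?thesis
      using \<open>0 < d\<close> by (simp add: divide_le_eq less_imp_le)
  qed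
  ultimately show ?thesis
    unfolding C_def d_def by linarith
qed

lemma Mmax_ge_entropy_bound:
  assumes "1 \<le> j" and "t \<le> s" and n: "n = s + 2 * j"
  shows "2 ^ (n + s) * real s ^ s * real n ^ n / (real (n + s) * real (n + s) ^ (n + s))
           \<le> real (Mmax n t)"
proof -
  define N where "N = n + s"
  define a where "a = s + j"
  have "0 < a" "N = 2 * a" "N - s = n" "s \<le> N"
    using assms unfolding N_def a_def by auto
  have "0 < N choose s" "0 < a choose j"
    using \<open>s \<le> N\<close> unfolding a_def by simp_all
  have "real (N choose s) * real (n choose j) = real (N choose a) * real (a choose j)"
    using choose_mult_choose_diff[of s j N] \<open>N - s = n\<close> \<open>N = 2 * a\<close>
    unfolding a_def by (metis mult_2 add_le_mono le_add1 of_nat_mult)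
  then have ratio: "real (n choose j) / real (a choose j) = real (N choose a) / real (N choose s)"
    using \<open>0 < N choose s\<close> \<open>0 < a choose j\<close> by (simp add: field_simps)
  have central: "2 ^ N / real N \<le> real (N choose a)"
    using central_binomial_lower_bound[OF \<open>0 < a\<close>] \<open>N = 2 * a\<close>
    by (simp add: power_mult)
  have "real (N choose s) * (real s ^ s * real n ^ n) \<le> real N ^ N"
    using choose_mult_pow_le_pow[OF \<open>s \<le> N\<close>] \<open>N - s = n\<close>
    by (metis (mono_tags) of_nat_le_iff of_nat_mult of_nat_power mult.assoc)
  then have entropy: "real s ^ s * real n ^ n / real N ^ N \<le> 1 / real (N choose s)"
    using \<open>0 < N choose s\<close> \<open>0 < a\<close> \<open>N = 2 * a\<close> by (simp add: field_simps)
  have "2 ^ N * real s ^ s * real n ^ n / (real N * real N ^ N)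
      = (2 ^ N / real N) * (real s ^ s * real n ^ n / real N ^ N)"
    by simp
  also have "\<dots> \<le> real (N choose a) * (1 / real (N choose s))"
    using central entropy by (intro mult_mono) auto
  also have "\<dots> = real (n choose j) / real (a choose j)"
    using ratio by simp
  also have "\<dots> \<le> real (Mmax n t)"
    unfolding a_def using assms(1,2) by (rule choose_div_le_Mmax)
  finally show ?thesis
    unfolding N_def .
qed

section \<open>The rate\<close>

text \<open>The case split in the definition of Rlow is vacuous, as log 2 0 = 0.\<close>

lemma Rlow_eq: "Rlow x = (1 + x) - (1 + x) * log 2 (1 + x) + x * log 2 x"
  by (simp add: Rlow_def)

lemma mult_Rlow_divide:
  assumes "0 < y" and "0 \<le> x"
  shows "y * Rlow (x / y) = (y + x) - (y + x) * log 2 (y + x) + y * log 2 y + x * log 2 x"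
proof (cases "x = 0")
  case False
  then have "0 < x"
    using assms(2) by simp
  have L1: "log 2 (1 + x / y) = log 2 (y + x) - log 2 y"
    using assms \<open>0 < x\<close> by (simp add: log_divide field_simps)
  have L2: "log 2 (x / y) = log 2 x - log 2 y"
    using assms(1) \<open>0 < x\<close> by (simp add: log_divide)
  show ?thesis
    unfolding Rlow_eq L1 L2 using assms(1) by (simp add: field_simps)
qed (simp add: Rlow_eq algebra_simps)

lemma log_Mmax_lower_bound:
  assumes "1 \<le> j" and "t \<le> s" and n: "n = s + 2 * j"
  shows "Rlow (real s / real n) - log 2 (real (n + s)) / real n \<le> log 2 (real (Mmax n t)) / real n"
proof -
  define N where "N = n + s"
  define B where "B = 2 ^ N * real s ^ s * real n ^ n / (real N * real N ^ N)"
  have "0 < n" "0 < N"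
    using assms unfolding N_def by auto
  have "0 < real s ^ s"
    by (cases "s = 0") auto
  then have "0 < B"
    using \<open>0 < n\<close> \<open>0 < N\<close> unfolding B_def by simp
  have "real n * Rlow (real s / real n) - log 2 (real N)
      = real N + real s * log 2 (real s) + real n * log 2 (real n)
          - log 2 (real N) - real N * log 2 (real N)"
    using mult_Rlow_divide[of "real n" "real s"] \<open>0 < n\<close> unfolding N_def by simp
  also have "\<dots> = log 2 B"
    using \<open>0 < real s ^ s\<close> \<open>0 < n\<close> \<open>0 < N\<close>
    by (simp add: B_def log_divide log_mult log_nat_power)
  also have "\<dots> \<le> log 2 (real (Mmax n t))"
    using \<open>0 < B\<close> Mmax_ge_entropy_bound[OF assms] unfolding B_def N_def by (intro log_mono) simp_all
  finally have "(real n * Rlow (real s / real n) - log 2 (real N)) / real n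
      \<le> log 2 (real (Mmax n t)) / real n"
    by (rule divide_right_mono) simp
  then show ?thesis
    using \<open>0 < n\<close> unfolding N_def by (simp add: diff_divide_distrib)
qed

lemma continuous_within_Rlow:
  assumes "0 \<le> \<tau>"
  shows "continuous (at \<tau> within {0..}) Rlow"
proof (cases "\<tau> = 0")
  case True
  have "((\<lambda>x. (1 + x) - (1 + x) * log 2 (1 + x) + x * log 2 x) \<longlongrightarrow> 1) (at_right 0)"
    by real_asymp
  then show ?thesis
    unfolding True continuous_within at_within_Ici_at_right Rlow_eq[abs_def] by simp
next
  case False
  then have "isCont Rlow \<tau>"
    using assms unfolding Rlow_eq[abs_def] by (intro continuous_intros) auto
  then show ?thesis
    by (rule continuous_at_imp_continuous_at_within)
qed

lemma real_nat_ceiling_less: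
  assumes "0 \<le> x"
  shows "real (nat \<lceil>x\<rceil>) < x + 1"
proof -
  have "real (nat \<lceil>x\<rceil>) = real_of_int \<lceil>x\<rceil>"
    using assms by simp
  then show ?thesis
    by linarith
qed

text \<open>The budget is rounded up when necessary, since the construction needs n = s + 2 j.\<close>

definition even_budget :: "real \<Rightarrow> nat \<Rightarrow> nat" where
  "even_budget \<tau> n = (let t = nat \<lceil>\<tau> * real n\<rceil> in if even (n - t) then t else Suc t)"

lemma even_budget_bounds:
  assumes "0 \<le> \<tau>"
  shows "nat \<lceil>\<tau> * real n\<rceil> \<le> even_budget \<tau> n" and "\<tau> * real n \<le> real (even_budget \<tau> n)"
    and "real (even_budget \<tau> n) \<le> \<tau> * real n + 2"
proof -
  have "real (nat \<lceil>\<tau> * real n\<rceil>) < \<tau> * real n + 1"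
    using assms by (intro real_nat_ceiling_less) simp
  then show "nat \<lceil>\<tau> * real n\<rceil> \<le> even_budget \<tau> n" "\<tau> * real n \<le> real (even_budget \<tau> n)"
    "real (even_budget \<tau> n) \<le> \<tau> * real n + 2"
    unfolding even_budget_def Let_def by (auto intro: real_nat_ceiling_ge order.trans)
qed

lemma even_budget_decomp:
  assumes "0 \<le> \<tau>" and "\<tau> * real n + 4 \<le> real n"
  obtains j where "1 \<le> j" and "n = even_budget \<tau> n + 2 * j"
proof -
  let ?t = "nat \<lceil>\<tau> * real n\<rceil>"
  have "real (?t + 3) < real (n + 1)"
    using real_nat_ceiling_less[of "\<tau> * real n"] assms by simp
  then have "?t + 3 \<le> n"
    by simp
  then have "even (n - even_budget \<tau> n)" and "even_budget \<tau> n + 2 \<le> n"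
    unfolding even_budget_def Let_def by auto
  then show ?thesis
    using that[of "(n - even_budget \<tau> n) div 2"] by auto
qed

lemma tendsto_even_budget_ratio:
  assumes "0 \<le> \<tau>"
  shows "(\<lambda>n. real (even_budget \<tau> n) / real n) \<longlonglongrightarrow> \<tau>"
proof (rule tendsto_sandwich[where f = "\<lambda>n. \<tau>" and h = "\<lambda>n. \<tau> + 2 / real n"])
  show "\<forall>\<^sub>F n in sequentially. \<tau> \<le> real (even_budget \<tau> n) / real n"
    using eventually_gt_at_top[of 0]
    by eventually_elim (use even_budget_bounds(2)[OF assms] in \<open>simp add: le_divide_eq\<close>)
  show "\<forall>\<^sub>F n in sequentially. real (even_budget \<tau> n) / real n \<le> \<tau> + 2 / real n"
  proof (rule eventually_mono[OF eventually_gt_at_top[of 0]])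
    fix n :: nat
    assume "0 < n"
    then have "real (even_budget \<tau> n) / real n \<le> (\<tau> * real n + 2) / real n"
      using even_budget_bounds(3)[OF assms] by (intro divide_right_mono) simp_all
    also have "\<dots> = \<tau> + 2 / real n"
      using \<open>0 < n\<close> by (simp add: field_simps)
    finally show "real (even_budget \<tau> n) / real n \<le> \<tau> + 2 / real n" .
  qed
  show "(\<lambda>n. \<tau> + 2 / real n) \<longlonglongrightarrow> \<tau>"
    by real_asymp
qed simp

lemma tendsto_log_even_budget:
  assumes "0 \<le> \<tau>" and "\<tau> \<le> 1"
  shows "(\<lambda>n. log 2 (real (n + even_budget \<tau> n)) / real n) \<longlonglongrightarrow> 0"
proof (rule tendsto_sandwich[where f = "\<lambda>n. 0" and h = "\<lambda>n. log 2 (2 * real n + 2) / real n"])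
  show "\<forall>\<^sub>F n in sequentially. 0 \<le> log 2 (real (n + even_budget \<tau> n)) / real n"
    using eventually_gt_at_top[of 0] by eventually_elim simp
  show "\<forall>\<^sub>F n in sequentially.
          log 2 (real (n + even_budget \<tau> n)) / real n \<le> log 2 (2 * real n + 2) / real n"
  proof (rule eventually_mono[OF eventually_gt_at_top[of 0]])
    fix n :: nat
    assume "0 < n"
    have "\<tau> * real n \<le> real n"
      using assms by (simp add: mult_left_le_one_le)
    then have "real (n + even_budget \<tau> n) \<le> 2 * real n + 2"
      using even_budget_bounds(3)[OF assms(1), of n] by simp
    then show "log 2 (real (n + even_budget \<tau> n)) / real n \<le> log 2 (2 * real n + 2) / real n"
      using \<open>0 < n\<close> by (intro divide_right_mono log_mono) simp_all
  qed
  show "(\<lambda>n. log 2 (2 * real n + 2) / real n) \<longlonglongrightarrow> 0"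
    by real_asymp
qed simp

lemma eventually_log_Mmax_ge:
  assumes "0 \<le> \<tau>" and "\<tau> < 1"
  shows "\<forall>\<^sub>F n in sequentially.
           Rlow (real (even_budget \<tau> n) / real n) - log 2 (real (n + even_budget \<tau> n)) / real n
             \<le> log 2 (real (Mmax n (nat \<lceil>\<tau> * real n\<rceil>))) / real n"
proof -
  have "\<forall>\<^sub>F n in sequentially. 4 / (1 - \<tau>) \<le> real n"
    by real_asymp
  then show ?thesis
  proof eventually_elim
    case (elim n)
    then have "\<tau> * real n + 4 \<le> real n"
      using assms by (simp add: field_simps)
    then obtain j where "1 \<le> j" and "n = even_budget \<tau> n + 2 * j"
      using even_budget_decomp assms(1) by blast
    then show ?case
      using log_Mmax_lower_bound even_budget_bounds(1)[OF assms(1)] by blast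
  qed
qed

lemma ereal_le_limsup_if_tendsto:
  fixes f g :: "nat \<Rightarrow> real"
  assumes "f \<longlonglongrightarrow> l" and "\<forall>\<^sub>F n in sequentially. f n \<le> g n"
  shows "ereal l \<le> limsup (\<lambda>n. ereal (g n))"
proof -
  have "limsup (\<lambda>n. ereal (f n)) = ereal l"
    using assms(1) by (intro lim_imp_Limsup) (simp_all add: tendsto_ereal)
  moreover have "limsup (\<lambda>n. ereal (f n)) \<le> limsup (\<lambda>n. ereal (g n))"
    using assms(2) by (intro Limsup_mono) simp
  ultimately show ?thesis
    by simp
qed

lemma Rate_nonneg: "0 \<le> Rate \<tau>"
proof -
  have "0 \<le> log 2 (real (Mmax n t)) / real n" for n t
    using one_le_Mmax[of n t] by simp
  then have "ereal 0 \<le> Rate \<tau>"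
    unfolding Rate_def by (intro ereal_le_limsup_if_tendsto[where f = "\<lambda>n. 0"]) simp_all
  then show ?thesis
    by (simp add: zero_ereal_def)
qed

theorem theorem1:
  fixes \<tau> :: real
  assumes "0 \<le> \<tau>" and "\<tau> \<le> 1"
  shows "Rate \<tau> \<ge> ereal (Rlow \<tau>)"
proof (cases "\<tau> = 1")
  case True
  then show ?thesis
    using Rate_nonneg by (simp add: Rlow_eq zero_ereal_def)
next
  case False
  have "(\<lambda>n. Rlow (real (even_budget \<tau> n) / real n)) \<longlonglongrightarrow> Rlow \<tau>"
    using continuous_within_Rlow[OF assms(1)] _ tendsto_even_budget_ratio[OF assms(1)]
    by (rule continuous_within_tendsto_compose') simp
  then have "(\<lambda>n. Rlow (real (even_budget \<tau> n) / real n)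
      - log 2 (real (n + even_budget \<tau> n)) / real n) \<longlonglongrightarrow> Rlow \<tau> - 0"
    using tendsto_log_even_budget[OF assms] by (rule tendsto_diff)
  moreover have "\<tau> < 1"
    using False assms(2) by simp
  ultimately show ?thesis
    unfolding Rate_def using eventually_log_Mmax_ge[OF assms(1)]
    by (intro ereal_le_limsup_if_tendsto) simp_all
qed

end
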